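(* Let $T$ be a positive integer, let $N=(N_l)_{0\le l\le T}$ satisfy $N_0=0$ with increments $N_{l+1}-N_l$ independent Poisson random variables with parameters $\gamma_l\ge0$, $0\le l\le T-1$, let $\mathfrak{F}=(\mathfrak{F}_k)$ be the natural augmented filtration of $N$, $I_k=I_0(-1)^{N_k}$ with $I_0\in\{-1,1\}$ deterministic, and for $1\le l\le T$ let $u_l=\frac12(1+e^{-2\gamma_{l-1}})$, $v_l=\frac12(1-e^{-2\gamma_{l-1}})$. For $0\le k\le T$ define $$Q_k=\sup_{\tau\in\mathcal{T}^k}\mathbb{E}_k\Big[\sum_{\ell=k+1}^{T}\big(\mathbf{1}_{I_\ell=-1}-\mathbf{1}_{I_\ell=1}\big)\mathbf{1}_{\ell\le\tau}\Big],$$ where $\mathcal{T}^k$ is the set of $\mathfrak{F}$-stopping times with values in $\{k,\dots,T\}$. Then $Q_k=Q(k,I_k)$, where $Q:\{0,\dots,T\}\times\{1,-1\}\to\mathbb{R}$ is given by $Q(T,\pm1)=0$ and, for $0\le k<T$, $$Q(k,-1)=e^{-2\gamma_k}+v_{k+1}Q(k+1,1)+u_{k+1}Q(k+1,-1)>0,$$ $$Q(k,1)=\max\big(0,\,-e^{-2\gamma_k}+u_{k+1}Q(k+1,1)+v_{k+1}Q(k+1,-1)\big).$$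
   Context: $\mathbb{E}_k$ denotes conditional expectation given $\mathfrak{F}_k$. *)

theory Defs
  imports "HOL-Probability.Probability"
begin

definition nat_gen_sets :: "'a measure \<Rightarrow> (nat \<Rightarrow> 'a \<Rightarrow> int) \<Rightarrow> nat \<Rightarrow> nat \<Rightarrow> 'a set set" where
  "nat_gen_sets M N T k =
     sets (sigma (space M) {{\<omega> \<in> space M. N j \<omega> = n} | j n. j \<le> min k T})"

definition aug_nat_filtration :: "'a measure \<Rightarrow> (nat \<Rightarrow> 'a \<Rightarrow> int) \<Rightarrow> nat \<Rightarrow> nat \<Rightarrow> 'a measure" where
  "aug_nat_filtration M N T k =
     sigma (space M)
       {A \<in> sets M. \<exists>B \<in> nat_gen_sets M N T k. \<exists>C \<in> null_sets M. (A - B) \<union> (B - A) \<subseteq> C}"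

definition is_ess_sup :: "'a measure \<Rightarrow> ('a \<Rightarrow> real) set \<Rightarrow> ('a \<Rightarrow> real) \<Rightarrow> bool" where
  "is_ess_sup M Xs Y \<longleftrightarrow>
     Y \<in> borel_measurable M \<and>
     (\<forall>X \<in> Xs. AE \<omega> in M. X \<omega> \<le> Y \<omega>) \<and>
     (\<forall>Z \<in> borel_measurable M. (\<forall>X \<in> Xs. AE \<omega> in M. X \<omega> \<le> Z \<omega>) \<longrightarrow> (AE \<omega> in M. Y \<omega> \<le> Z \<omega>))"

definition u_coef :: "(nat \<Rightarrow> real) \<Rightarrow> nat \<Rightarrow> real" where
  "u_coef \<gamma> l = (1 + exp (- 2 * \<gamma> (l - 1))) / 2"

definition v_coef :: "(nat \<Rightarrow> real) \<Rightarrow> nat \<Rightarrow> real" where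
  "v_coef \<gamma> l = (1 - exp (- 2 * \<gamma> (l - 1))) / 2"

function Qfun :: "(nat \<Rightarrow> real) \<Rightarrow> nat \<Rightarrow> nat \<Rightarrow> int \<Rightarrow> real" where
  "Qfun \<gamma> T k i =
     (if T \<le> k then 0
      else if i = -1 then
        exp (- 2 * \<gamma> k) + v_coef \<gamma> (Suc k) * Qfun \<gamma> T (Suc k) 1
          + u_coef \<gamma> (Suc k) * Qfun \<gamma> T (Suc k) (-1)
      else
        max 0 (- exp (- 2 * \<gamma> k) + u_coef \<gamma> (Suc k) * Qfun \<gamma> T (Suc k) 1
          + v_coef \<gamma> (Suc k) * Qfun \<gamma> T (Suc k) (-1)))"
  by pat_completeness auto
termination by (relation "Wellfounded.measure (\<lambda>(\<gamma>, T, k, i). T - k)") auto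

end

(* Conditionally on F_k, the increment N_(k+1) - N_k is independent of F_k, so the next
   state I_(k+1) equals I_k with probability u_(k+1) (an even number of jumps) and -I_k
   with probability v_(k+1); for a Poisson variable with parameter g the probability of
   being even is (1 + exp (-2 g)) / 2.  Hence Q satisfies the Bellman equation
   Q(k,i) = max 0 (u (r i + Q(k+1,i)) + v (r (-i) + Q(k+1,-i))) with running reward
   r i = 1_(i = -1) - 1_(i = 1).  Backward induction on k then shows that the integral of
   the gain of any stopping time tau >= k over a set A in F_k is at most that of Q(k,I_k),
   with equality for the stopping time that stops as soon as Q vanishes.  So every
   conditional gain is a.s. below Q(k,I_k), and one of them equals it. *)

theory Submission
  imports Defs
begin

section \<open>Parity of a Poisson variable\<close>

lemma poisson_pmf_sums: "(\<lambda>n. exp (- g) * g ^ n / fact n) sums (1::real)"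
proof -
  have "(\<lambda>n. exp (- g) * (g ^ n /\<^sub>R fact n)) sums (exp (- g) * exp g)"
    by (intro sums_mult exp_converges)
  then show ?thesis by (simp add: exp_minus divide_inverse mult_ac)
qed

lemma poisson_pmf_alternating_sums:
  "(\<lambda>n. (-1) ^ n * (exp (- g) * g ^ n / fact n)) sums exp (- 2 * g :: real)"
proof -
  have "(\<lambda>n. exp (- g) * ((- g) ^ n /\<^sub>R fact n)) sums (exp (- g) * exp (- g))"
    by (intro sums_mult exp_converges)
  moreover have "exp (- g) * exp (- g) = exp (- 2 * g)"
    by (simp add: mult_exp_exp)
  ultimately show ?thesis
    by (simp add: power_minus[of g] divide_inverse mult_ac)
qed

lemma (in prob_space) prob_nat_valued_sums:
  fixes X :: "'a \<Rightarrow> int"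
  assumes [measurable]: "X \<in> measurable M (count_space UNIV)"
  shows "(\<lambda>n. prob {\<omega> \<in> space M. X \<omega> = int n \<and> P n})
           sums prob {\<omega> \<in> space M. 0 \<le> X \<omega> \<and> P (nat (X \<omega>))}"
proof -
  have "(\<Union>n. {\<omega> \<in> space M. X \<omega> = int n \<and> P n}) = {\<omega> \<in> space M. 0 \<le> X \<omega> \<and> P (nat (X \<omega>))}"
    by auto (metis nat_0_le)
  moreover have "(\<lambda>n. prob {\<omega> \<in> space M. X \<omega> = int n \<and> P n})
      sums prob (\<Union>n. {\<omega> \<in> space M. X \<omega> = int n \<and> P n})"
    by (rule finite_measure_UNION) (auto simp: disjoint_family_on_def)
  ultimately show ?thesis by simp
qed

context prob_space
begin

context
  fixes X :: "'a \<Rightarrow> int" and g :: real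
  assumes X_measurable [measurable]: "X \<in> measurable M (count_space UNIV)"
    and X_poisson: "\<And>n::nat. prob {\<omega> \<in> space M. X \<omega> = int n} = exp (- g) * g ^ n / fact n"
begin

lemma AE_poisson_nonneg: "AE \<omega> in M. 0 \<le> X \<omega>"
proof -
  have "prob {\<omega> \<in> space M. 0 \<le> X \<omega>} = 1"
    using prob_nat_valued_sums[OF X_measurable, of "\<lambda>_. True"] poisson_pmf_sums[of g]
    by (simp add: X_poisson sums_unique2)
  from AE_prob_1[OF this] show ?thesis by eventually_elim simp
qed

lemma prob_poisson_even: "prob {\<omega> \<in> space M. even (X \<omega>)} = (1 + exp (- 2 * g)) / 2"
proof -
  have "prob {\<omega> \<in> space M. X \<omega> = int n \<and> even n}
      = (exp (- g) * g ^ n / fact n + (-1) ^ n * (exp (- g) * g ^ n / fact n)) / 2" for n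
    by (cases "even n") (simp_all add: X_poisson)
  then have "(\<lambda>n. prob {\<omega> \<in> space M. X \<omega> = int n \<and> even n}) sums ((1 + exp (- 2 * g)) / 2)"
    by (simp only:) (intro sums_divide sums_add poisson_pmf_sums poisson_pmf_alternating_sums)
  from sums_unique2[OF prob_nat_valued_sums[OF X_measurable, of even] this]
  have "prob {\<omega> \<in> space M. 0 \<le> X \<omega> \<and> even (nat (X \<omega>))} = (1 + exp (- 2 * g)) / 2" .
  moreover have "prob {\<omega> \<in> space M. even (X \<omega>)} = prob {\<omega> \<in> space M. 0 \<le> X \<omega> \<and> even (nat (X \<omega>))}"
    by (rule finite_measure_eq_AE) (use AE_poisson_nonneg in \<open>auto simp: even_nat_iff\<close>)
  ultimately show ?thesis by simp
qed

end

end

lemma u_coef_plus_v_coef: "u_coef \<gamma> l + v_coef \<gamma> l = 1"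
  by (simp add: u_coef_def v_coef_def field_simps)

lemma u_coef_minus_v_coef: "u_coef \<gamma> l - v_coef \<gamma> l = exp (- 2 * \<gamma> (l - 1))"
  by (simp add: u_coef_def v_coef_def field_simps)

lemma u_coef_nonneg: "0 \<le> u_coef \<gamma> l"
  by (simp add: u_coef_def add_nonneg_nonneg)

lemma v_coef_nonneg: "0 \<le> \<gamma> (l - 1) \<Longrightarrow> 0 \<le> v_coef \<gamma> l"
  by (simp add: v_coef_def)

definition reward :: "int \<Rightarrow> real" where
  "reward i = (if i = -1 then 1 else 0) - (if i = 1 then 1 else 0)"

text \<open>The value of continuing from state \<open>i\<close> at time \<open>k\<close>: the state is kept after an even
  number of jumps (probability \<open>u\<close>) and flipped after an odd number (probability \<open>v\<close>).\<close>

definition continuation :: "(nat \<Rightarrow> real) \<Rightarrow> nat \<Rightarrow> nat \<Rightarrow> int \<Rightarrow> real" where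
  "continuation \<gamma> T k i =
     u_coef \<gamma> (Suc k) * (reward i + Qfun \<gamma> T (Suc k) i)
       + v_coef \<gamma> (Suc k) * (reward (- i) + Qfun \<gamma> T (Suc k) (- i))"

declare Qfun.simps [simp del]

lemma Qfun_terminal: "T \<le> k \<Longrightarrow> Qfun \<gamma> T k i = 0"
  by (subst Qfun.simps) simp

lemma Qfun_minus_one:
  "k < T \<Longrightarrow> Qfun \<gamma> T k (-1) =
     exp (- 2 * \<gamma> k) + v_coef \<gamma> (Suc k) * Qfun \<gamma> T (Suc k) 1
       + u_coef \<gamma> (Suc k) * Qfun \<gamma> T (Suc k) (-1)"
  by (subst Qfun.simps) simp

lemma Qfun_one:
  "k < T \<Longrightarrow> Qfun \<gamma> T k 1 =
     max 0 (- exp (- 2 * \<gamma> k) + u_coef \<gamma> (Suc k) * Qfun \<gamma> T (Suc k) 1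
       + v_coef \<gamma> (Suc k) * Qfun \<gamma> T (Suc k) (-1))"
  by (subst Qfun.simps) simp

context
  fixes \<gamma> :: "nat \<Rightarrow> real" and T :: nat
  assumes gamma_nonneg: "\<forall>l < T. 0 \<le> \<gamma> l"
begin

lemma Qfun_nonneg: "0 \<le> Qfun \<gamma> T k i"
proof (induction "T - k" arbitrary: k i)
  case 0
  then show ?case by (simp add: Qfun_terminal)
next
  case (Suc n)
  then have "k < T" and "\<And>j. 0 \<le> Qfun \<gamma> T (Suc k) j" by auto
  moreover have "0 \<le> v_coef \<gamma> (Suc k)"
    using gamma_nonneg \<open>k < T\<close> by (simp add: v_coef_nonneg)
  ultimately show ?case
    using u_coef_nonneg[of \<gamma> "Suc k"]
    by (subst Qfun.simps) (auto intro!: add_nonneg_nonneg mult_nonneg_nonneg)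
qed

lemma Qfun_minus_one_pos: "k < T \<Longrightarrow> 0 < Qfun \<gamma> T k (-1)"
  using gamma_nonneg Qfun_nonneg u_coef_nonneg v_coef_nonneg[of \<gamma> "Suc k"]
  by (auto simp: Qfun_minus_one intro!: add_pos_nonneg)

lemma Qfun_eq_max_continuation:
  assumes "k < T" and "i \<in> {-1, 1}"
  shows "Qfun \<gamma> T k i = max 0 (continuation \<gamma> T k i)"
proof -
  have u: "u_coef \<gamma> (Suc k) = v_coef \<gamma> (Suc k) + exp (- 2 * \<gamma> k)"
    using u_coef_minus_v_coef[of \<gamma> "Suc k"] by simp
  have "continuation \<gamma> T k (-1) = Qfun \<gamma> T k (-1)"
    unfolding continuation_def reward_def Qfun_minus_one[OF assms(1)] u
    by (simp add: algebra_simps)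
  moreover have "max 0 (continuation \<gamma> T k 1) = Qfun \<gamma> T k 1"
    unfolding continuation_def reward_def Qfun_one[OF assms(1)] u
    by (simp add: algebra_simps)
  ultimately show ?thesis
    using assms(2) Qfun_minus_one_pos[OF assms(1)] by auto
qed

end

lemma set_integrable_of_integrable:
  fixes f :: "'a \<Rightarrow> 'b::{banach, second_countable_topology}"
  shows "A \<in> sets M \<Longrightarrow> integrable M f \<Longrightarrow> set_integrable M A f"
  unfolding set_integrable_def by (rule integrable_mult_indicator)

lemma AE_le_of_set_integral_le:
  fixes f g :: "'a \<Rightarrow> real"
  assumes "subalgebra M F"
    and [measurable]: "f \<in> borel_measurable F" "g \<in> borel_measurable F"
    and "integrable M f" "integrable M g"
    and le: "\<And>A. A \<in> sets F \<Longrightarrow> (\<integral>x\<in>A. f x \<partial>M) \<le> (\<integral>x\<in>A. g x \<partial>M)"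
  shows "AE x in M. f x \<le> g x"
proof -
  define A where "A = {x \<in> space M. g x < f x}"
  have "space F = space M"
    using assms(1) by (simp add: subalgebra_def)
  moreover have "{x \<in> space F. g x < f x} \<in> sets F"
    by measurable
  ultimately have "A \<in> sets F"
    by (simp add: A_def)
  then have "A \<in> sets M"
    using assms(1) by (auto simp: subalgebra_def)
  have int: "set_integrable M A f" "set_integrable M A g"
    using \<open>A \<in> sets M\<close> assms(4,5) by (auto intro: set_integrable_of_integrable)
  then have int_diff: "integrable M (\<lambda>x. indicator A x * (f x - g x))"
    using set_integral_diff(1)[OF int] by (simp add: set_integrable_def)
  have "(\<integral>x\<in>A. f x - g x \<partial>M) \<le> 0"
    using le[OF \<open>A \<in> sets F\<close>] int by (simp add: set_integral_diff)
  moreover have nonneg: "AE x in M. 0 \<le> indicator A x * (f x - g x)"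
    by (auto simp: A_def indicator_def)
  ultimately have "(\<integral>x. indicator A x * (f x - g x) \<partial>M) = 0"
    using integral_nonneg_AE[OF nonneg] by (simp add: set_lebesgue_integral_def)
  then have "AE x in M. indicator A x * (f x - g x) = 0"
    using integral_nonneg_eq_0_iff_AE[OF int_diff nonneg] by simp
  with AE_space show ?thesis
  proof eventually_elim
    case (elim x)
    then show "f x \<le> g x" by (cases "g x < f x") (simp_all add: A_def)
  qed
qed

lemma is_ess_sup_attained:
  assumes "Y \<in> borel_measurable M"
    and "\<And>X. X \<in> Xs \<Longrightarrow> AE \<omega> in M. X \<omega> \<le> Y \<omega>"
    and "X\<^sub>0 \<in> Xs" and "AE \<omega> in M. X\<^sub>0 \<omega> = Y \<omega>"
  shows "is_ess_sup M Xs Y"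
  unfolding is_ess_sup_def
proof (intro conjI ballI allI impI)
  fix Z assume "\<forall>X \<in> Xs. AE \<omega> in M. X \<omega> \<le> Z \<omega>"
  with assms(3) have "AE \<omega> in M. X\<^sub>0 \<omega> \<le> Z \<omega>" by blast
  with assms(4) show "AE \<omega> in M. Y \<omega> \<le> Z \<omega>" by eventually_elim simp
qed (use assms in auto)

section \<open>The augmented natural filtration\<close>

definition null_augment :: "'a measure \<Rightarrow> 'a set set \<Rightarrow> 'a set set" where
  "null_augment M S = {A \<in> sets M. \<exists>B \<in> S. \<exists>C \<in> null_sets M. (A - B) \<union> (B - A) \<subseteq> C}"

lemma null_augment_subset: "null_augment M S \<subseteq> sets M"
  by (auto simp: null_augment_def)

lemma null_augment_mono: "S \<subseteq> S' \<Longrightarrow> null_augment M S \<subseteq> null_augment M S'"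
  by (auto simp: null_augment_def)

lemma in_null_augmentI: "A \<in> S \<Longrightarrow> A \<in> sets M \<Longrightarrow> A \<in> null_augment M S"
  unfolding null_augment_def by (intro CollectI conjI bexI[of _ A] bexI[of _ "{}"]) auto

lemma null_augment_Pow: "null_augment M S \<subseteq> Pow (space M)"
  using null_augment_subset sets.sets_into_space by blast

lemma Int_stable_null_augment:
  assumes "Int_stable S" shows "Int_stable (null_augment M S)"
proof (rule Int_stableI)
  fix A A' assume "A \<in> null_augment M S" "A' \<in> null_augment M S"
  then obtain B C B' C' where "A \<in> sets M" "B \<in> S" "C \<in> null_sets M" and AB: "(A - B) \<union> (B - A) \<subseteq> C"
    and "A' \<in> sets M" "B' \<in> S" "C' \<in> null_sets M" and AB': "(A' - B') \<union> (B' - A') \<subseteq> C'"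
    unfolding null_augment_def by blast
  have "B \<inter> B' \<in> S"
    using assms \<open>B \<in> S\<close> \<open>B' \<in> S\<close> by (auto simp: Int_stable_def)
  moreover have "C \<union> C' \<in> null_sets M"
    using \<open>C \<in> null_sets M\<close> \<open>C' \<in> null_sets M\<close> by blast
  moreover have "(A \<inter> A' - B \<inter> B') \<union> (B \<inter> B' - A \<inter> A') \<subseteq> C \<union> C'"
    using AB AB' by blast
  ultimately show "A \<inter> A' \<in> null_augment M S"
    using \<open>A \<in> sets M\<close> \<open>A' \<in> sets M\<close> unfolding null_augment_def
    by (intro CollectI conjI sets.Int bexI[of _ "B \<inter> B'"] bexI[of _ "C \<union> C'"])
qed

lemma (in prob_space) indep_set_mono:
  "indep_set A B \<Longrightarrow> A' \<subseteq> A \<Longrightarrow> B' \<subseteq> B \<Longrightarrow> indep_set A' B'"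
  by (rule indep_setI) (auto dest: indep_setD indep_setD_ev1 indep_setD_ev2)

lemma (in prob_space) indep_set_null_augment:
  assumes "indep_set S E" shows "indep_set (null_augment M S) E"
proof (rule indep_setI)
  show "null_augment M S \<subseteq> events" by (rule null_augment_subset)
  show "E \<subseteq> events" using assms by (rule indep_setD_ev2)
next
  fix A D assume "A \<in> null_augment M S" "D \<in> E"
  then obtain B C where "A \<in> events" "B \<in> S" "C \<in> null_sets M" "(A - B) \<union> (B - A) \<subseteq> C"
    unfolding null_augment_def by blast
  have "B \<in> events" "D \<in> events"
    using indep_setD_ev1[OF assms] indep_setD_ev2[OF assms] \<open>B \<in> S\<close> \<open>D \<in> E\<close> by auto
  have same: "AE x in M. (x \<in> A) = (x \<in> B)"
    using AE_not_in[OF \<open>C \<in> null_sets M\<close>] by eventually_elim (use \<open>(A - B) \<union> (B - A) \<subseteq> C\<close> in auto)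
  have "prob (A \<inter> D) = prob (B \<inter> D)"
    using same \<open>A \<in> events\<close> \<open>B \<in> events\<close> \<open>D \<in> events\<close> by (intro finite_measure_eq_AE) auto
  also have "\<dots> = prob B * prob D"
    using indep_setD[OF assms \<open>B \<in> S\<close> \<open>D \<in> E\<close>] .
  also have "prob B = prob A"
    using same \<open>A \<in> events\<close> \<open>B \<in> events\<close> by (intro finite_measure_eq_AE) auto
  finally show "prob (A \<inter> D) = prob A * prob D" .
qed

lemma aug_nat_filtration_eq:
  "aug_nat_filtration M N T k = sigma (space M) (null_augment M (nat_gen_sets M N T k))"
  by (simp add: aug_nat_filtration_def null_augment_def)

lemma space_aug_nat_filtration [simp]: "space (aug_nat_filtration M N T k) = space M"
  unfolding aug_nat_filtration_eq by (rule space_measure_of[OF null_augment_Pow])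

lemma sets_aug_nat_filtration:
  "sets (aug_nat_filtration M N T k) = sigma_sets (space M) (null_augment M (nat_gen_sets M N T k))"
  unfolding aug_nat_filtration_eq by (rule sets_measure_of[OF null_augment_Pow])

lemma subalgebra_aug_nat_filtration: "subalgebra M (aug_nat_filtration M N T k)"
  unfolding subalgebra_def sets_aug_nat_filtration
  by (simp add: sets.sigma_sets_subset null_augment_subset)

lemma nat_gen_sets_eq:
  "nat_gen_sets M N T k = sigma_sets (space M) {{\<omega> \<in> space M. N j \<omega> = n} | j n. j \<le> min k T}"
  unfolding nat_gen_sets_def by (subst sets_measure_of) auto

lemma aug_nat_filtration_mono:
  assumes "k \<le> k'" shows "sets (aug_nat_filtration M N T k) \<subseteq> sets (aug_nat_filtration M N T k')"
proof -
  have "nat_gen_sets M N T k \<subseteq> nat_gen_sets M N T k'"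
    unfolding nat_gen_sets_eq using assms by (intro sigma_sets_mono') auto
  then show ?thesis
    unfolding sets_aug_nat_filtration by (intro sigma_sets_mono' null_augment_mono)
qed

lemma N_level_set_in_aug_nat_filtration:
  assumes "j \<le> min k T" and "{\<omega> \<in> space M. N j \<omega> = n} \<in> sets M"
  shows "{\<omega> \<in> space M. N j \<omega> = n} \<in> sets (aug_nat_filtration M N T k)"
proof -
  have "{\<omega> \<in> space M. N j \<omega> = n} \<in> nat_gen_sets M N T k"
    unfolding nat_gen_sets_eq using assms(1) by blast
  with assms(2) show ?thesis
    unfolding sets_aug_nat_filtration by (blast intro: in_null_augmentI)
qed

locale telegraph = prob_space M for M :: "'a measure" +
  fixes T :: nat and \<gamma> :: "nat \<Rightarrow> real" and N :: "nat \<Rightarrow> 'a \<Rightarrow> int" and I0 :: int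
  assumes gamma_nonneg: "\<forall>l < T. 0 \<le> \<gamma> l"
    and N_zero: "\<forall>\<omega> \<in> space M. N 0 \<omega> = 0"
    and indep_increments:
      "indep_vars (\<lambda>_. count_space UNIV) (\<lambda>l \<omega>. N (Suc l) \<omega> - N l \<omega>) {..<T}"
    and poisson_increments: "\<forall>l < T. \<forall>n::nat.
      prob {\<omega> \<in> space M. N (Suc l) \<omega> - N l \<omega> = int n} = exp (- \<gamma> l) * \<gamma> l ^ n / fact n"
    and I0: "I0 \<in> {-1, 1}"
begin

abbreviation F :: "nat \<Rightarrow> 'a measure" where
  "F \<equiv> aug_nat_filtration M N T"

definition increment :: "nat \<Rightarrow> 'a \<Rightarrow> int" where
  "increment l \<omega> = N (Suc l) \<omega> - N l \<omega>"

definition signal :: "nat \<Rightarrow> 'a \<Rightarrow> int" where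
  "signal l \<omega> = I0 * (-1) ^ nat (N l \<omega>)"

definition increment_events :: "nat \<Rightarrow> 'a set set" where
  "increment_events l = {increment l -` A \<inter> space M | A. A \<in> sets (count_space UNIV)}"

definition past :: "nat \<Rightarrow> 'a measure" where
  "past l = sigma (space M) (\<Union>i<l. increment_events i)"

lemma filtration_subset_events: "A \<in> sets (F l) \<Longrightarrow> A \<in> events"
  using subalgebra_aug_nat_filtration[of M N T l] unfolding subalgebra_def by blast

lemma measurable_increment: "l < T \<Longrightarrow> increment l \<in> measurable M (count_space UNIV)"
  using indep_increments unfolding indep_vars_def2 increment_def[abs_def] by auto

lemma increment_events_Pow: "(\<Union>i<l. increment_events i) \<subseteq> Pow (space M)"
  by (auto simp: increment_events_def)

lemma space_past [simp]: "space (past l) = space M"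
  unfolding past_def by (rule space_measure_of[OF increment_events_Pow])

lemma sets_past: "sets (past l) = sigma_sets (space M) (\<Union>i<l. increment_events i)"
  unfolding past_def by (rule sets_measure_of[OF increment_events_Pow])

lemma measurable_increment_past: "i < l \<Longrightarrow> increment i \<in> measurable (past l) (count_space UNIV)"
  by (rule measurableI) (auto simp: sets_past increment_events_def)

lemma measurable_N_past: "j \<le> l \<Longrightarrow> N j \<in> measurable (past l) (count_space UNIV)"
proof (induction j)
  case 0
  have "(\<lambda>_. 0 :: int) \<in> measurable (past l) (count_space UNIV)"
    by simp
  then show ?case
    by (rule measurable_cong[THEN iffD1, rotated]) (use N_zero in auto)
next
  case (Suc j)
  then have "(\<lambda>\<omega>. N j \<omega> + increment j \<omega>) \<in> measurable (past l) (count_space UNIV)"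
    using measurable_increment_past[of j l] by simp
  then show ?case
    by (simp add: increment_def)
qed

lemma sets_past_subset: "l \<le> T \<Longrightarrow> sets (past l) \<subseteq> events"
  unfolding sets_past
  using measurable_increment by (intro sets.sigma_sets_subset) (auto simp: increment_events_def)

lemma nat_gen_sets_subset_past: "l \<le> T \<Longrightarrow> nat_gen_sets M N T l \<subseteq> sets (past l)"
proof -
  have "{{\<omega> \<in> space M. N j \<omega> = n} | j n. j \<le> min l T} \<subseteq> sets (past l)"
  proof
    fix A assume "A \<in> {{\<omega> \<in> space M. N j \<omega> = n} | j n. j \<le> min l T}"
    then obtain j n where "A = {\<omega> \<in> space M. N j \<omega> = n}" "j \<le> l"
      by auto
    moreover have "N j -` {n} \<inter> space (past l) \<in> sets (past l)" if "j \<le> l"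
      using measurable_N_past[OF that] by (rule measurable_sets) simp
    ultimately show "A \<in> sets (past l)"
      by (simp add: vimage_def Int_def conj_commute)
  qed
  from sets.sigma_sets_subset[OF this] show ?thesis
    unfolding nat_gen_sets_eq by simp
qed

lemma Int_stable_increment_events: "Int_stable (increment_events l)"
proof (rule Int_stableI)
  fix a b assume "a \<in> increment_events l" "b \<in> increment_events l"
  then obtain A B where "a = increment l -` A \<inter> space M" "b = increment l -` B \<inter> space M"
    by (auto simp: increment_events_def)
  then have "a \<inter> b = increment l -` (A \<inter> B) \<inter> space M"
    by auto
  then show "a \<inter> b \<in> increment_events l"
    unfolding increment_events_def by (intro CollectI exI[of _ "A \<inter> B"]) simp
qed

lemma indep_past_increment:
  assumes "l < T" shows "indep_set (sets (past l)) (increment_events l)"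
proof -
  let ?I = "case_bool {..<l} {l}"
  have "indep_sets increment_events {..<T}"
    using indep_increments unfolding indep_vars_def2 increment_events_def increment_def[abs_def] by auto
  then have "indep_sets increment_events (\<Union>j. ?I j)"
    by (rule indep_sets_mono_index[rotated]) (use assms in \<open>auto split: bool.split_asm\<close>)
  then have "indep_sets (\<lambda>j. sigma_sets (space M) (\<Union>i\<in>?I j. increment_events i)) UNIV"
    by (rule indep_sets_collect_sigma)
      (auto simp: Int_stable_increment_events disjoint_family_on_def split: bool.split)
  then have "indep_set (sets (past l)) (sigma_sets (space M) (increment_events l))"
    unfolding indep_set_def sets_past by (simp add: case_bool_if if_distrib cong: if_cong)
  then show ?thesis
    by (rule indep_set_mono) auto
qed

lemma indep_filtration_increment:
  assumes "l < T" shows "indep_set (sets (F l)) (increment_events l)"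
proof -
  have "indep_set (nat_gen_sets M N T l) (increment_events l)"
    using assms by (intro indep_set_mono[OF indep_past_increment[OF assms]] nat_gen_sets_subset_past) auto
  then have "indep_set (null_augment M (nat_gen_sets M N T l)) (increment_events l)"
    by (rule indep_set_null_augment)
  then have "indep_set (sets (F l)) (sigma_sets (space M) (increment_events l))"
    unfolding sets_aug_nat_filtration
    by (rule indep_set_sigma_sets)
      (auto simp only: nat_gen_sets_def intro: Int_stable_null_augment sets.Int_stable Int_stable_increment_events)
  then show ?thesis
    by (rule indep_set_mono) auto
qed

lemma prob_Int_increment_event:
  assumes "l < T" and "A \<in> sets (F l)"
  shows "prob (A \<inter> {\<omega> \<in> space M. P (increment l \<omega>)})
           = prob A * prob {\<omega> \<in> space M. P (increment l \<omega>)}"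
proof (rule indep_setD[OF indep_filtration_increment[OF assms(1)] assms(2)])
  have "{\<omega> \<in> space M. P (increment l \<omega>)} = increment l -` {d. P d} \<inter> space M"
    by auto
  then show "{\<omega> \<in> space M. P (increment l \<omega>)} \<in> increment_events l"
    unfolding increment_events_def by (intro CollectI exI[of _ "{d. P d}"]) simp
qed

lemma AE_increment_nonneg: "l < T \<Longrightarrow> AE \<omega> in M. 0 \<le> increment l \<omega>"
  using poisson_increments
  by (intro AE_poisson_nonneg[OF measurable_increment]) (auto simp: increment_def)

lemma prob_increment_even: "l < T \<Longrightarrow> prob {\<omega> \<in> space M. even (increment l \<omega>)} = u_coef \<gamma> (Suc l)"
  using poisson_increments
  by (subst prob_poisson_even[OF measurable_increment]) (auto simp: increment_def u_coef_def)

lemma prob_increment_odd: "l < T \<Longrightarrow> prob {\<omega> \<in> space M. odd (increment l \<omega>)} = v_coef \<gamma> (Suc l)"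
proof -
  assume "l < T"
  have "{\<omega> \<in> space M. even (increment l \<omega>)} \<in> events"
    using measurable_increment[OF \<open>l < T\<close>] by measurable
  moreover have "{\<omega> \<in> space M. odd (increment l \<omega>)} = space M - {\<omega> \<in> space M. even (increment l \<omega>)}"
    by auto
  ultimately show ?thesis
    using prob_compl prob_increment_even[OF \<open>l < T\<close>] u_coef_plus_v_coef[of \<gamma> "Suc l"]
    by simp
qed

lemma AE_N_nonneg: "l \<le> T \<Longrightarrow> AE \<omega> in M. 0 \<le> N l \<omega>"
proof (induction l)
  case 0
  show ?case using N_zero by (intro AE_I2) simp
next
  case (Suc l)
  then have "AE \<omega> in M. 0 \<le> N l \<omega>" "AE \<omega> in M. 0 \<le> increment l \<omega>"
    using AE_increment_nonneg by auto
  then show ?case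
    by eventually_elim (simp add: increment_def)
qed

lemma signal_cases: "signal l \<omega> \<in> {-1, 1}"
  using I0 by (auto simp: signal_def minus_one_power_iff)

lemma AE_signal_Suc:
  assumes "l < T"
  shows "AE \<omega> in M. signal (Suc l) \<omega> = (if even (increment l \<omega>) then signal l \<omega> else - signal l \<omega>)"
proof -
  have "AE \<omega> in M. 0 \<le> N l \<omega>" using AE_N_nonneg assms by simp
  with AE_increment_nonneg[OF assms] show ?thesis
  proof eventually_elim
    case (elim \<omega>)
    then have "nat (N (Suc l) \<omega>) = nat (N l \<omega>) + nat (increment l \<omega>)"
      by (simp add: increment_def)
    with elim show ?case
      by (simp add: signal_def power_add even_nat_iff)
  qed
qed

lemma measurable_N_filtration: "l \<le> T \<Longrightarrow> N l \<in> measurable (F l) (count_space UNIV)"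
proof (rule measurable_count_space_eq2_countable[THEN iffD2], safe)
  fix n assume "l \<le> T"
  have "N l -` {n} \<inter> space (past l) \<in> sets (past l)"
    using measurable_N_past[OF order_refl] by (rule measurable_sets) simp
  then have "{\<omega> \<in> space M. N l \<omega> = n} \<in> events"
    using sets_past_subset[OF \<open>l \<le> T\<close>] by (auto simp: vimage_def Int_def conj_commute)
  then show "N l -` {n} \<inter> space (F l) \<in> sets (F l)"
    using N_level_set_in_aug_nat_filtration[of l l T] \<open>l \<le> T\<close>
    by (simp add: vimage_def Int_def conj_commute)
qed simp

lemma measurable_signal: "l \<le> T \<Longrightarrow> (\<lambda>\<omega>. f (signal l \<omega>) :: real) \<in> borel_measurable (F l)"
  unfolding signal_def using measurable_N_filtration by measurable

lemma measurable_signal_events: "l \<le> T \<Longrightarrow> (\<lambda>\<omega>. f (signal l \<omega>) :: real) \<in> borel_measurable M"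
  using measurable_signal measurable_from_subalg[OF subalgebra_aug_nat_filtration] by blast

lemma integrable_signal: "l \<le> T \<Longrightarrow> integrable M (\<lambda>\<omega>. f (signal l \<omega>) :: real)"
proof (rule integrable_const_bound[where B = "\<bar>f 1\<bar> + \<bar>f (-1)\<bar>"])
  have "norm (f (signal l \<omega>)) \<le> \<bar>f 1\<bar> + \<bar>f (-1)\<bar>" for \<omega>
    using signal_cases[of l \<omega>] by auto
  then show "AE \<omega> in M. norm (f (signal l \<omega>)) \<le> \<bar>f 1\<bar> + \<bar>f (-1)\<bar>"
    by simp
qed (rule measurable_signal_events)

lemma sets_signal_level: "l \<le> T \<Longrightarrow> {\<omega> \<in> space M. signal l \<omega> = i} \<in> sets (F l)"
proof -
  assume "l \<le> T"
  then have [measurable]: "N l \<in> measurable (F l) (count_space UNIV)"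
    by (rule measurable_N_filtration)
  have "{\<omega> \<in> space (F l). signal l \<omega> = i} \<in> sets (F l)"
    unfolding signal_def by measurable
  then show ?thesis by simp
qed

lemma set_integral_signal_Suc_level:
  assumes l: "l < T" and B: "B \<in> sets (F l)" and level: "\<And>\<omega>. \<omega> \<in> B \<Longrightarrow> signal l \<omega> = i"
  shows "(\<integral>\<omega>\<in>B. \<phi> (signal (Suc l) \<omega>) \<partial>M)
           = (u_coef \<gamma> (Suc l) * \<phi> i + v_coef \<gamma> (Suc l) * \<phi> (- i)) * prob B"
proof -
  define Ev where "Ev = {\<omega> \<in> space M. even (increment l \<omega>)}"
  define Od where "Od = {\<omega> \<in> space M. odd (increment l \<omega>)}"
  have "B \<in> events"
    using B by (rule filtration_subset_events)
  have [measurable]: "increment l \<in> measurable M (count_space UNIV)"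
    using l by (rule measurable_increment)
  have "Ev \<in> events" "Od \<in> events"
    unfolding Ev_def Od_def by measurable
  have "(\<integral>\<omega>\<in>B. \<phi> (signal (Suc l) \<omega>) \<partial>M)
      = (\<integral>\<omega>. \<phi> i * indicator (B \<inter> Ev) \<omega> + \<phi> (- i) * indicator (B \<inter> Od) \<omega> \<partial>M)"
    unfolding set_lebesgue_integral_def
  proof (rule integral_cong_AE)
    show "(\<lambda>\<omega>. indicator B \<omega> *\<^sub>R \<phi> (signal (Suc l) \<omega>)) \<in> borel_measurable M"
      using \<open>B \<in> events\<close> measurable_signal_events[of "Suc l" \<phi>] l by simp
    show "(\<lambda>\<omega>. \<phi> i * indicator (B \<inter> Ev) \<omega> + \<phi> (- i) * indicator (B \<inter> Od) \<omega>) \<in> borel_measurable M"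
      using \<open>B \<in> events\<close> \<open>Ev \<in> events\<close> \<open>Od \<in> events\<close> by measurable
    show "AE \<omega> in M. indicator B \<omega> *\<^sub>R \<phi> (signal (Suc l) \<omega>)
        = \<phi> i * indicator (B \<inter> Ev) \<omega> + \<phi> (- i) * indicator (B \<inter> Od) \<omega>"
      using AE_signal_Suc[OF l] AE_space
      by eventually_elim (auto simp: Ev_def Od_def level indicator_def)
  qed
  also have "\<dots> = \<phi> i * prob (B \<inter> Ev) + \<phi> (- i) * prob (B \<inter> Od)"
    using \<open>B \<in> events\<close> \<open>Ev \<in> events\<close> \<open>Od \<in> events\<close>
    by (simp add: emeasure_eq_measure Int_absorb2 sets.sets_into_space)
  also have "\<dots> = (u_coef \<gamma> (Suc l) * \<phi> i + v_coef \<gamma> (Suc l) * \<phi> (- i)) * prob B"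
    using prob_Int_increment_event[OF l B, of even] prob_Int_increment_event[OF l B, of odd]
      prob_increment_even[OF l] prob_increment_odd[OF l]
    by (simp add: Ev_def Od_def algebra_simps)
  finally show ?thesis .
qed

lemma set_integral_signal_Suc:
  assumes l: "l < T" and B: "B \<in> sets (F l)"
  shows "(\<integral>\<omega>\<in>B. \<phi> (signal (Suc l) \<omega>) \<partial>M)
           = (\<integral>\<omega>\<in>B. u_coef \<gamma> (Suc l) * \<phi> (signal l \<omega>) + v_coef \<gamma> (Suc l) * \<phi> (- signal l \<omega>) \<partial>M)"
    (is "?L B = ?R B")
proof -
  define B' where "B' i = B \<inter> {\<omega> \<in> space M. signal l \<omega> = i}" for i
  have B'_sets: "B' i \<in> sets (F l)" for i
    unfolding B'_def using B sets_signal_level l by auto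
  then have B'_events: "B' i \<in> events" for i
    by (rule filtration_subset_events)
  have on_level: "?L (B' i) = ?R (B' i)" for i
  proof -
    have "?R (B' i) = (\<integral>\<omega>\<in>B' i. u_coef \<gamma> (Suc l) * \<phi> i + v_coef \<gamma> (Suc l) * \<phi> (- i) \<partial>M)"
      by (rule set_lebesgue_integral_cong[OF B'_events]) (auto simp: B'_def)
    moreover have "?L (B' i) = (u_coef \<gamma> (Suc l) * \<phi> i + v_coef \<gamma> (Suc l) * \<phi> (- i)) * prob (B' i)"
      by (rule set_integral_signal_Suc_level[OF l B'_sets]) (simp add: B'_def)
    ultimately show ?thesis
      using B'_events by (simp add: set_integral_const emeasure_eq_measure)
  qed
  have split: "?L B = ?L (B' 1) + ?L (B' (-1))" "?R B = ?R (B' 1) + ?R (B' (-1))"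
  proof -
    have "B = B' 1 \<union> B' (-1)"
      using sets.sets_into_space[OF filtration_subset_events[OF B]] signal_cases[of l]
      by (auto simp: B'_def)
    moreover have "B' 1 \<inter> B' (-1) = {}"
      by (auto simp: B'_def)
    ultimately show "?L B = ?L (B' 1) + ?L (B' (-1))" "?R B = ?R (B' 1) + ?R (B' (-1))"
      using B'_events l
      by (auto intro!: set_integral_Un set_integrable_of_integrable integrable_signal
          simp del: Int_iff)
  qed
  show ?thesis
    unfolding split on_level ..
qed

section \<open>Optimal stopping\<close>

definition gain :: "nat \<Rightarrow> ('a \<Rightarrow> nat) \<Rightarrow> 'a \<Rightarrow> real" where
  "gain k \<tau> \<omega> = (\<Sum>l\<in>{Suc k..T}. reward (signal l \<omega>) * (if l \<le> \<tau> \<omega> then 1 else 0))"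

definition Qval :: "nat \<Rightarrow> 'a \<Rightarrow> real" where
  "Qval k \<omega> = Qfun \<gamma> T k (signal k \<omega>)"

definition stopping_times :: "nat \<Rightarrow> ('a \<Rightarrow> nat) set" where
  "stopping_times k = {\<tau>. stopping_time F \<tau> \<and> (\<forall>\<omega> \<in> space M. \<tau> \<omega> \<in> {k..T})}"

lemma gain_Suc: "l < T \<Longrightarrow> l < \<tau> \<omega> \<Longrightarrow> gain l \<tau> \<omega> = reward (signal (Suc l) \<omega>) + gain (Suc l) \<tau> \<omega>"
  unfolding gain_def by (subst sum.atLeast_Suc_atMost) auto

lemma gain_stopped: "\<tau> \<omega> \<le> l \<Longrightarrow> gain l \<tau> \<omega> = 0"
  unfolding gain_def by (intro sum.neutral) auto

lemma gain_terminal: "gain T \<tau> \<omega> = 0"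
  by (simp add: gain_def)

lemma Qval_terminal: "Qval T \<omega> = 0"
  by (simp add: Qval_def Qfun_terminal)

lemma Qval_nonneg: "0 \<le> Qval k \<omega>"
  unfolding Qval_def using gamma_nonneg by (rule Qfun_nonneg)

lemma Qval_eq_max_continuation: "l < T \<Longrightarrow> Qval l \<omega> = max 0 (continuation \<gamma> T l (signal l \<omega>))"
  unfolding Qval_def by (rule Qfun_eq_max_continuation[OF gamma_nonneg _ signal_cases])

lemma measurable_stopping_times:
  assumes "\<tau> \<in> stopping_times k" shows "\<tau> \<in> measurable M (count_space UNIV)"
proof -
  have "stopping_time F \<tau>"
    using assms by (simp add: stopping_times_def)
  then have "\<tau> \<in> M \<rightarrow>\<^sub>M borel"
    by (rule measurable_stopping_time) (auto intro: filtration_subset_events)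
  then show ?thesis
    by (simp add: measurable_cong_sets[OF refl sets_borel_eq_count_space, symmetric])
qed

lemma integrable_gain:
  assumes "\<tau> \<in> stopping_times k" shows "integrable M (gain l \<tau>)"
  unfolding gain_def[abs_def]
proof (rule Bochner_Integration.integrable_sum)
  fix j assume "j \<in> {Suc l..T}"
  have [measurable]: "\<tau> \<in> measurable M (count_space UNIV)"
    using assms by (rule measurable_stopping_times)
  have "(\<lambda>\<omega>. reward (signal j \<omega>)) \<in> borel_measurable M"
    using \<open>j \<in> {Suc l..T}\<close> by (intro measurable_signal_events) auto
  then show "integrable M (\<lambda>\<omega>. reward (signal j \<omega>) * (if j \<le> \<tau> \<omega> then 1 else 0))"
    by (intro integrable_const_bound[where B = 1]) (auto simp: reward_def)
qed

lemma integrable_Qval: "k \<le> T \<Longrightarrow> integrable M (Qval k)"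
  unfolding Qval_def[abs_def] by (rule integrable_signal)

lemma stopping_times_terminal: "(\<lambda>_. T) \<in> stopping_times T"
  by (simp add: stopping_times_def stopping_time_const)

lemma stopping_times_max_Suc:
  "\<tau> \<in> stopping_times l \<Longrightarrow> l < T \<Longrightarrow> (\<lambda>\<omega>. max (\<tau> \<omega>) (Suc l)) \<in> stopping_times (Suc l)"
  by (auto simp: stopping_times_def intro: stopping_time_max stopping_time_const)

lemma sets_less_stopping_time: "\<tau> \<in> stopping_times l \<Longrightarrow> {\<omega> \<in> space M. l < \<tau> \<omega>} \<in> sets (F l)"
  using stopping_timeD2[of F \<tau> l] by (simp add: stopping_times_def Measurable.pred_def)

lemma stopping_times_stop_outside:
  assumes "l < T" and S: "S \<in> sets (F l)" and \<tau>: "\<tau> \<in> stopping_times (Suc l)"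
  shows "(\<lambda>\<omega>. if \<omega> \<in> S then \<tau> \<omega> else l) \<in> stopping_times l"
proof -
  have \<tau>_range: "\<omega> \<in> space M \<Longrightarrow> Suc l \<le> \<tau> \<omega> \<and> \<tau> \<omega> \<le> T" for \<omega>
    using \<tau> by (auto simp: stopping_times_def)
  have "{\<omega> \<in> space M. (if \<omega> \<in> S then \<tau> \<omega> else l) \<le> t} \<in> sets (F t)" for t
  proof (cases "t < l")
    case True
    then have "{\<omega> \<in> space M. (if \<omega> \<in> S then \<tau> \<omega> else l) \<le> t} = {}"
      using \<tau>_range by force
    then show ?thesis by (metis sets.empty_sets)
  next
    case False
    have "S \<in> sets (F t)"
      using S aug_nat_filtration_mono[of l t] False by auto
    moreover have "{\<omega> \<in> space M. \<tau> \<omega> \<le> t} \<in> sets (F t)"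
      using stopping_timeD[of F \<tau> t] \<tau> by (simp add: stopping_times_def Measurable.pred_def)
    moreover have "{\<omega> \<in> space M. (if \<omega> \<in> S then \<tau> \<omega> else l) \<le> t}
        = (S \<inter> {\<omega> \<in> space M. \<tau> \<omega> \<le> t}) \<union> (space M - S)"
      using False sets.sets_into_space[OF S] by auto
    ultimately show ?thesis
      by (metis (no_types) sets.Diff sets.Int sets.Un sets.top space_aug_nat_filtration)
  qed
  then have "stopping_time F (\<lambda>\<omega>. if \<omega> \<in> S then \<tau> \<omega> else l)"
    unfolding stopping_time_def Measurable.pred_def space_aug_nat_filtration by blast
  then show ?thesis
    using \<tau>_range \<open>l < T\<close> by (auto simp: stopping_times_def Suc_leD)
qed

lemma set_integral_reward_Suc_plus:
  assumes l: "l < T" and B: "B \<in> sets (F l)" and X: "integrable M X"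
  shows "(\<integral>\<omega>\<in>B. reward (signal (Suc l) \<omega>) + X \<omega> \<partial>M)
           = (\<integral>\<omega>\<in>B. continuation \<gamma> T l (signal l \<omega>) \<partial>M)
             + ((\<integral>\<omega>\<in>B. X \<omega> \<partial>M) - (\<integral>\<omega>\<in>B. Qval (Suc l) \<omega> \<partial>M))"
proof -
  have B_events: "B \<in> events"
    using B by (rule filtration_subset_events)
  have int: "set_integrable M B (\<lambda>\<omega>. reward (signal (Suc l) \<omega>))" "set_integrable M B X"
      "set_integrable M B (Qval (Suc l))"
    using B_events X l by (auto intro!: set_integrable_of_integrable integrable_signal integrable_Qval)
  have "(\<integral>\<omega>\<in>B. reward (signal (Suc l) \<omega>) + Qval (Suc l) \<omega> \<partial>M)
      = (\<integral>\<omega>\<in>B. continuation \<gamma> T l (signal l \<omega>) \<partial>M)"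
    using set_integral_signal_Suc[OF l B, of "\<lambda>i. reward i + Qfun \<gamma> T (Suc l) i"]
    by (simp add: Qval_def continuation_def)
  with int show ?thesis
    by (simp add: set_integral_add)
qed

lemma set_integral_gain_split:
  assumes l: "l < T" and \<tau>: "\<tau> \<in> stopping_times l" and A: "A \<in> sets (F l)"
  shows "(\<integral>\<omega>\<in>A. gain l \<tau> \<omega> \<partial>M)
           = (\<integral>\<omega>\<in>A \<inter> {\<omega> \<in> space M. l < \<tau> \<omega>}. reward (signal (Suc l) \<omega>) + gain (Suc l) \<tau> \<omega> \<partial>M)"
  unfolding set_lebesgue_integral_def
proof (rule Bochner_Integration.integral_cong[OF refl])
  fix \<omega> assume \<omega>: "\<omega> \<in> space M"
  then have "l \<le> \<tau> \<omega>"
    using \<tau> by (auto simp: stopping_times_def)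
  then show "indicator A \<omega> *\<^sub>R gain l \<tau> \<omega>
      = indicator (A \<inter> {\<omega> \<in> space M. l < \<tau> \<omega>}) \<omega> *\<^sub>R (reward (signal (Suc l) \<omega>) + gain (Suc l) \<tau> \<omega>)"
    using \<omega> gain_Suc[OF l, of \<tau> \<omega>] gain_stopped[of \<tau> \<omega> l]
    by (cases "l < \<tau> \<omega>") (auto simp: indicator_def)
qed

lemma set_integral_continuation_le_Qval:
  assumes l: "l < T" and A: "A \<in> sets (F l)" and B: "B \<in> sets (F l)" "B \<subseteq> A"
  shows "(\<integral>\<omega>\<in>B. continuation \<gamma> T l (signal l \<omega>) \<partial>M) \<le> (\<integral>\<omega>\<in>A. Qval l \<omega> \<partial>M)"
proof -
  have "continuation \<gamma> T l (signal l \<omega>) \<le> Qval l \<omega>" "0 \<le> Qval l \<omega>" for \<omega>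
    using Qval_eq_max_continuation[OF l] by auto
  then have "indicator B \<omega> * continuation \<gamma> T l (signal l \<omega>) \<le> indicator A \<omega> * Qval l \<omega>" for \<omega>
    using B(2) by (auto simp: indicator_def)
  moreover have "integrable M (\<lambda>\<omega>. indicator B \<omega> * continuation \<gamma> T l (signal l \<omega>))"
      "integrable M (\<lambda>\<omega>. indicator A \<omega> * Qval l \<omega>)"
    using integrable_mult_indicator[OF filtration_subset_events[OF B(1)] integrable_signal[of l]]
      integrable_mult_indicator[OF filtration_subset_events[OF A] integrable_Qval[of l]] l
    by simp_all
  ultimately show ?thesis
    unfolding set_lebesgue_integral_def by (auto intro: integral_mono)
qed

lemma set_integral_continuation_eq_Qval:
  assumes l: "l < T"
  shows "(\<integral>\<omega>\<in>A \<inter> {\<omega> \<in> space M. 0 < Qval l \<omega>}. continuation \<gamma> T l (signal l \<omega>) \<partial>M)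
           = (\<integral>\<omega>\<in>A. Qval l \<omega> \<partial>M)"
  unfolding set_lebesgue_integral_def
proof (rule Bochner_Integration.integral_cong[OF refl])
  fix \<omega> assume "\<omega> \<in> space M"
  then show "indicator (A \<inter> {\<omega> \<in> space M. 0 < Qval l \<omega>}) \<omega> *\<^sub>R continuation \<gamma> T l (signal l \<omega>)
      = indicator A \<omega> *\<^sub>R Qval l \<omega>"
    using Qval_eq_max_continuation[OF l, of \<omega>] Qval_nonneg[of l \<omega>]
    by (cases "0 < Qval l \<omega>") (auto simp: indicator_def max_def)
qed

lemma set_integral_gain_le_Qval:
  assumes "l \<le> T" and "\<tau> \<in> stopping_times l" and "A \<in> sets (F l)"
  shows "(\<integral>\<omega>\<in>A. gain l \<tau> \<omega> \<partial>M) \<le> (\<integral>\<omega>\<in>A. Qval l \<omega> \<partial>M)"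
  using assms
proof (induction l arbitrary: \<tau> A rule: inc_induct)
  case base
  then show ?case by (simp add: gain_terminal Qval_terminal)
next
  case (step k)
  define C where "C = A \<inter> {\<omega> \<in> space M. k < \<tau> \<omega>}"
  define \<tau>' where "\<tau>' \<omega> = max (\<tau> \<omega>) (Suc k)" for \<omega>
  have C: "C \<in> sets (F k)"
    using step.prems sets_less_stopping_time unfolding C_def by auto
  have "(\<integral>\<omega>\<in>C. gain (Suc k) \<tau> \<omega> \<partial>M) = (\<integral>\<omega>\<in>C. gain (Suc k) \<tau>' \<omega> \<partial>M)"
    using filtration_subset_events[OF C]
    by (rule set_lebesgue_integral_cong) (simp add: C_def \<tau>'_def gain_def)
  also have "\<dots> \<le> (\<integral>\<omega>\<in>C. Qval (Suc k) \<omega> \<partial>M)"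
  proof (rule step.IH)
    show "\<tau>' \<in> stopping_times (Suc k)"
      unfolding \<tau>'_def using step.prems(1) step.hyps(2) by (rule stopping_times_max_Suc)
    show "C \<in> sets (F (Suc k))"
      using C aug_nat_filtration_mono[of k "Suc k"] by auto
  qed
  finally have IH: "(\<integral>\<omega>\<in>C. gain (Suc k) \<tau> \<omega> \<partial>M) \<le> (\<integral>\<omega>\<in>C. Qval (Suc k) \<omega> \<partial>M)" .
  have "(\<integral>\<omega>\<in>A. gain k \<tau> \<omega> \<partial>M) = (\<integral>\<omega>\<in>C. reward (signal (Suc k) \<omega>) + gain (Suc k) \<tau> \<omega> \<partial>M)"
    unfolding C_def using step.hyps(2) step.prems by (rule set_integral_gain_split)
  also have "\<dots> = (\<integral>\<omega>\<in>C. continuation \<gamma> T k (signal k \<omega>) \<partial>M)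
      + ((\<integral>\<omega>\<in>C. gain (Suc k) \<tau> \<omega> \<partial>M) - (\<integral>\<omega>\<in>C. Qval (Suc k) \<omega> \<partial>M))"
    using step.hyps(2) C integrable_gain[OF step.prems(1)] by (rule set_integral_reward_Suc_plus)
  also have "\<dots> \<le> (\<integral>\<omega>\<in>C. continuation \<gamma> T k (signal k \<omega>) \<partial>M)"
    using IH by simp
  also have "\<dots> \<le> (\<integral>\<omega>\<in>A. Qval k \<omega> \<partial>M)"
    using step.hyps(2) step.prems(2) C by (rule set_integral_continuation_le_Qval) (auto simp: C_def)
  finally show ?case .
qed

lemma exists_optimal_stopping_time:
  assumes "l \<le> T"
  shows "\<exists>\<tau> \<in> stopping_times l. \<forall>A \<in> sets (F l).
           (\<integral>\<omega>\<in>A. gain l \<tau> \<omega> \<partial>M) = (\<integral>\<omega>\<in>A. Qval l \<omega> \<partial>M)"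
  using assms
proof (induction l rule: inc_induct)
  case base
  show ?case
    using stopping_times_terminal by (auto simp: gain_terminal Qval_terminal)
next
  case (step k)
  then obtain \<tau>' where \<tau>': "\<tau>' \<in> stopping_times (Suc k)"
    and opt: "\<And>A. A \<in> sets (F (Suc k)) \<Longrightarrow>
      (\<integral>\<omega>\<in>A. gain (Suc k) \<tau>' \<omega> \<partial>M) = (\<integral>\<omega>\<in>A. Qval (Suc k) \<omega> \<partial>M)"
    by blast
  \<comment> \<open>stop at once where the value vanishes, otherwise continue optimally from \<open>Suc k\<close>\<close>
  define S where "S = {\<omega> \<in> space M. 0 < Qval k \<omega>}"
  define \<tau> where "\<tau> \<omega> = (if \<omega> \<in> S then \<tau>' \<omega> else k)" for \<omega>
  have S: "S \<in> sets (F k)"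
  proof -
    have [measurable]: "Qval k \<in> borel_measurable (F k)"
      unfolding Qval_def[abs_def] using step.hyps(2) by (intro measurable_signal) simp
    have "{\<omega> \<in> space (F k). 0 < Qval k \<omega>} \<in> sets (F k)"
      by measurable
    then show ?thesis by (simp add: S_def)
  qed
  have \<tau>: "\<tau> \<in> stopping_times k"
    unfolding \<tau>_def[abs_def] using step.hyps(2) S \<tau>' by (rule stopping_times_stop_outside)
  have continue: "{\<omega> \<in> space M. k < \<tau> \<omega>} = S"
    using \<tau>' by (force simp: \<tau>_def S_def stopping_times_def)
  have "(\<integral>\<omega>\<in>A. gain k \<tau> \<omega> \<partial>M) = (\<integral>\<omega>\<in>A. Qval k \<omega> \<partial>M)" if A: "A \<in> sets (F k)" for A
  proof -
    have AS: "A \<inter> S \<in> sets (F k)"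
      using A S by auto
    have "(\<integral>\<omega>\<in>A \<inter> S. gain (Suc k) \<tau> \<omega> \<partial>M) = (\<integral>\<omega>\<in>A \<inter> S. gain (Suc k) \<tau>' \<omega> \<partial>M)"
      using filtration_subset_events[OF AS] by (rule set_lebesgue_integral_cong) (simp add: \<tau>_def gain_def)
    also have "\<dots> = (\<integral>\<omega>\<in>A \<inter> S. Qval (Suc k) \<omega> \<partial>M)"
      using AS aug_nat_filtration_mono[of k "Suc k"] by (intro opt) auto
    finally have IH: "(\<integral>\<omega>\<in>A \<inter> S. gain (Suc k) \<tau> \<omega> \<partial>M) = (\<integral>\<omega>\<in>A \<inter> S. Qval (Suc k) \<omega> \<partial>M)" .
    have "(\<integral>\<omega>\<in>A. gain k \<tau> \<omega> \<partial>M) = (\<integral>\<omega>\<in>A \<inter> S. reward (signal (Suc k) \<omega>) + gain (Suc k) \<tau> \<omega> \<partial>M)"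
      using set_integral_gain_split[OF step.hyps(2) \<tau> A] by (simp only: continue)
    also have "\<dots> = (\<integral>\<omega>\<in>A \<inter> S. continuation \<gamma> T k (signal k \<omega>) \<partial>M)"
      using set_integral_reward_Suc_plus[OF step.hyps(2) AS integrable_gain[OF \<tau>]] IH by simp
    also have "\<dots> = (\<integral>\<omega>\<in>A. Qval k \<omega> \<partial>M)"
      unfolding S_def using step.hyps(2) by (rule set_integral_continuation_eq_Qval)
    finally show ?thesis .
  qed
  with \<tau> show ?case by blast
qed

lemma is_ess_sup_Qval:
  assumes k: "k \<le> T"
  shows "is_ess_sup M ((\<lambda>\<tau>. real_cond_exp M (F k) (gain k \<tau>)) ` stopping_times k) (Qval k)"
proof -
  interpret Fk: finite_measure_subalgebra M "F k"
    by (simp add: finite_measure_subalgebra_def finite_measure_subalgebra_axioms_def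
        subalgebra_aug_nat_filtration finite_measure_axioms)
  have Qval_measurable: "Qval k \<in> borel_measurable (F k)"
    unfolding Qval_def[abs_def] using k by (rule measurable_signal)
  obtain \<tau>\<^sub>0 where \<tau>\<^sub>0: "\<tau>\<^sub>0 \<in> stopping_times k"
    and opt: "\<forall>A \<in> sets (F k). (\<integral>\<omega>\<in>A. gain k \<tau>\<^sub>0 \<omega> \<partial>M) = (\<integral>\<omega>\<in>A. Qval k \<omega> \<partial>M)"
    using exists_optimal_stopping_time[OF k] by blast
  show ?thesis
  proof (rule is_ess_sup_attained)
    show "Qval k \<in> borel_measurable M"
      using integrable_Qval[OF k] by blast
  next
    fix X assume "X \<in> (\<lambda>\<tau>. real_cond_exp M (F k) (gain k \<tau>)) ` stopping_times k"
    then obtain \<tau> where \<tau>: "\<tau> \<in> stopping_times k" and X: "X = real_cond_exp M (F k) (gain k \<tau>)"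
      by blast
    show "AE \<omega> in M. X \<omega> \<le> Qval k \<omega>"
      unfolding X
    proof (rule AE_le_of_set_integral_le[OF subalgebra_aug_nat_filtration])
      fix A assume A: "A \<in> sets (F k)"
      then show "(\<integral>\<omega>\<in>A. real_cond_exp M (F k) (gain k \<tau>) \<omega> \<partial>M) \<le> (\<integral>\<omega>\<in>A. Qval k \<omega> \<partial>M)"
        using Fk.real_cond_exp_intA[OF integrable_gain[OF \<tau>] A] set_integral_gain_le_Qval[OF k \<tau> A]
        by simp
    qed (use Qval_measurable integrable_Qval[OF k] integrable_gain[OF \<tau>] in auto)
  next
    show "real_cond_exp M (F k) (gain k \<tau>\<^sub>0) \<in> (\<lambda>\<tau>. real_cond_exp M (F k) (gain k \<tau>)) ` stopping_times k"
      using \<tau>\<^sub>0 by blast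
    show "AE \<omega> in M. real_cond_exp M (F k) (gain k \<tau>\<^sub>0) \<omega> = Qval k \<omega>"
      using opt integrable_gain[OF \<tau>\<^sub>0] integrable_Qval[OF k] Qval_measurable
      by (intro Fk.real_cond_exp_charact) auto
  qed
qed

end

theorem lemma5p3:
  fixes M :: "'a measure" and T :: nat and \<gamma> :: "nat \<Rightarrow> real"
    and N :: "nat \<Rightarrow> 'a \<Rightarrow> int" and I0 :: int
  assumes "prob_space M"
    and "T > 0"
    and "\<forall>l < T. \<gamma> l \<ge> 0"
    and "\<forall>\<omega> \<in> space M. N 0 \<omega> = 0"
    and "prob_space.indep_vars M (\<lambda>_. count_space UNIV) (\<lambda>l \<omega>. N (Suc l) \<omega> - N l \<omega>) {..<T}"
    and "\<forall>l < T. \<forall>n::nat. measure M {\<omega> \<in> space M. N (Suc l) \<omega> - N l \<omega> = int n}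
            = exp (- \<gamma> l) * \<gamma> l ^ n / fact n"
    and "I0 \<in> {-1, 1}"
  shows "(\<forall>k \<le> T.
           is_ess_sup M
             {real_cond_exp M (aug_nat_filtration M N T k)
                (\<lambda>\<omega>. \<Sum>l \<in> {Suc k..T}.
                   ((if I0 * (-1) ^ nat (N l \<omega>) = -1 then 1 else 0)
                    - (if I0 * (-1) ^ nat (N l \<omega>) = 1 then 1 else 0))
                   * (if l \<le> \<tau> \<omega> then 1 else (0::real)))
              | \<tau>. stopping_time (aug_nat_filtration M N T) \<tau> \<and> (\<forall>\<omega> \<in> space M. \<tau> \<omega> \<in> {k..T})}
             (\<lambda>\<omega>. Qfun \<gamma> T k (I0 * (-1) ^ nat (N k \<omega>))))
         \<and> (\<forall>k < T. Qfun \<gamma> T k (-1) > 0)"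
proof -
  interpret telegraph M T \<gamma> N I0
    using assms by (simp add: telegraph_def telegraph_axioms_def)
  have "(\<lambda>\<omega>. \<Sum>l \<in> {Suc k..T}.
           ((if I0 * (-1) ^ nat (N l \<omega>) = -1 then 1 else 0)
            - (if I0 * (-1) ^ nat (N l \<omega>) = 1 then 1 else 0))
           * (if l \<le> \<tau> \<omega> then 1 else (0::real))) = gain k \<tau>" for k \<tau>
    by (simp add: fun_eq_iff gain_def reward_def signal_def)
  moreover have "(\<lambda>\<omega>. Qfun \<gamma> T k (I0 * (-1) ^ nat (N k \<omega>))) = Qval k" for k
    by (simp add: fun_eq_iff Qval_def signal_def)
  moreover have "{real_cond_exp M (F k) (gain k \<tau>) | \<tau>. stopping_time F \<tau> \<and> (\<forall>\<omega> \<in> space M. \<tau> \<omega> \<in> {k..T})}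
      = (\<lambda>\<tau>. real_cond_exp M (F k) (gain k \<tau>)) ` stopping_times k" for k
    by (auto simp: stopping_times_def)
  ultimately show ?thesis
    using is_ess_sup_Qval Qfun_minus_one_pos[OF gamma_nonneg] by simp
qed

end
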